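(* Let $I\subset\mathbb{R}$ be an open interval, $W\subset I$ a countable dense subset, $\mathrm{gr}\colon W\to\mathbb{N}$ a grading with finite fibers, $K>1$, and give the fractured interval $\check I$ the division metric $d$ with steepness $K$. Suppose there are constants $M,\alpha>0$ with $\mathrm{gap}(r)\ge M r^\alpha$ for all $r>0$. Let $X$ be a metric space and $f\colon\check I\to X$ a function with $f = \tilde f\circ\pi|_{\check I}$ for some $\tilde f\colon I\to X$ (equivalently, $f(w^L)=f(w^R)$ for all $w\in W$). If $f$ is Hölder with exponent $\nu>0$ and constant $C$ (i.e. $d_X(f(s),f(t))\le C\,d(s,t)^\nu$), then $\tilde f$ is Hölder with exponent $\nu/\alpha$ with respect to the Euclidean metric on $I$: $d_X(\tilde f(a),\tilde f(b))\le \frac{2C}{M^{\nu/\alpha}}|b-a|^{\nu/\alpha}$ for all $a,b\in I$.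
   Context: The divided interval of $I$ at $W$ is $\hat I = \{w^{L}, \hat w, w^{R} : w\in W\}\sqcup (I\smallsetminus W)$, with $\pi\colon\hat I\to I$ sending $w^L,\hat w,w^R$ to $w$ and fixing $I\smallsetminus W$, totally ordered so that $\pi$ is order preserving and $w^L<\hat w<w^R$. For $a,b\in\hat I\cup\{\pm\infty\}$, $(a,b)=\{s: a<s<b\}$; basis intervals are the nonempty $(a,b)$ other than those with $a=w^L$ or $b=w^R$, and they generate the topology. The fractured interval is $\check I=\hat I\smallsetminus\{\hat w:w\in W\}$. The height of $\hat w$ is $K^{-\mathrm{gr}(w)}$, all other points have height $0$; the division metric is $d(a,b)=$ maximum height of points of $(a,b)\subset\hat I$ for $a<b$ in $\check I$. Let $W_{\ge r}=\{w\in W: K^{-\mathrm{gr}(w)}\ge r\}$ and $\mathrm{gap}(r)$ be the minimum Euclidean distance between distinct points of $W_{\ge r}$ (with $\mathrm{gap}(r)=+\infty$ if $W_{\ge r}$ has fewer than two points). *)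

theory Defs
  imports "HOL-Analysis.Analysis"
begin

text \<open>Points of the divided interval are pairs (x, s): for w in W the three
points w^L, w-hat, w^R are (w,SL), (w,SM), (w,SR); a point x of I outside W
is represented by (x,SM).\<close>

datatype side = SL | SM | SR

fun side_rank :: "side \<Rightarrow> nat" where
  "side_rank SL = 0" | "side_rank SM = 1" | "side_rank SR = 2"

definition divided_interval :: "real set \<Rightarrow> real set \<Rightarrow> (real \<times> side) set" where
  "divided_interval I W = {(x, s). x \<in> I \<and> (x \<in> W \<or> s = SM)}"

definition fractured_interval :: "real set \<Rightarrow> real set \<Rightarrow> (real \<times> side) set" where
  "fractured_interval I W = {(x, s). x \<in> I \<and> (if x \<in> W then s \<noteq> SM else s = SM)}"

definition proj :: "real \<times> side \<Rightarrow> real" where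
  "proj p = fst p"

definition div_less :: "real \<times> side \<Rightarrow> real \<times> side \<Rightarrow> bool" where
  "div_less p q \<longleftrightarrow> fst p < fst q \<or> (fst p = fst q \<and> side_rank (snd p) < side_rank (snd q))"

definition height :: "real \<Rightarrow> real set \<Rightarrow> (real \<Rightarrow> nat) \<Rightarrow> real \<times> side \<Rightarrow> real" where
  "height K W gr p = (if fst p \<in> W \<and> snd p = SM then K powr (- real (gr (fst p))) else 0)"

text \<open>Division metric: for a < b, the maximum height of points of the open
interval (a,b) of the divided interval (this maximum exists; we write it as a Sup).\<close>
definition div_dist_ord ::
  "real \<Rightarrow> real set \<Rightarrow> real set \<Rightarrow> (real \<Rightarrow> nat) \<Rightarrow> real \<times> side \<Rightarrow> real \<times> side \<Rightarrow> real" where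
  "div_dist_ord K I W gr a b =
     Sup (height K W gr ` {p \<in> divided_interval I W. div_less a p \<and> div_less p b})"

definition div_dist ::
  "real \<Rightarrow> real set \<Rightarrow> real set \<Rightarrow> (real \<Rightarrow> nat) \<Rightarrow> real \<times> side \<Rightarrow> real \<times> side \<Rightarrow> real" where
  "div_dist K I W gr a b =
     (if div_less a b then div_dist_ord K I W gr a b
      else if div_less b a then div_dist_ord K I W gr b a else 0)"

definition W_ge :: "real \<Rightarrow> real set \<Rightarrow> (real \<Rightarrow> nat) \<Rightarrow> real \<Rightarrow> real set" where
  "W_ge K W gr r = {w \<in> W. K powr (- real (gr w)) \<ge> r}"

text \<open>gap(r): minimum distance between distinct points of W_{>=r}; +infinity if
there are fewer than two points (Inf of the empty set in ereal).\<close>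
definition gap :: "real \<Rightarrow> real set \<Rightarrow> (real \<Rightarrow> nat) \<Rightarrow> real \<Rightarrow> ereal" where
  "gap K W gr r = Inf {ereal \<bar>u - v\<bar> | u v. u \<in> W_ge K W gr r \<and> v \<in> W_ge K W gr r \<and> u \<noteq> v}"

end

theory Submission
  imports Defs
begin

text \<open>For \<open>a < b\<close> compare \<open>a\<^sup>R\<close> with \<open>b\<^sup>L\<close>: their division distance is the largest height
\<open>K powr -gr w\<close> of a point \<open>w \<in> W\<close> strictly between \<open>a\<close> and \<open>b\<close>. Choose \<open>r\<close> with
\<open>M r\<^sup>\<alpha> > b - a\<close>; by the gap condition at most one \<open>w \<in> (a, b)\<close> has height \<open>\<ge> r\<close>.
Splitting \<open>(a, b)\<close> at that point leaves two intervals on which the division distance is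
\<open>\<le> r\<close>, so the Hoelder condition and the triangle inequality give
\<open>dist (ft a) (ft b) \<le> 2 C r\<^sup>\<nu>\<close>. Letting \<open>r\<close> decrease to \<open>((b - a) / M)\<^sup>1\<^sup>/\<^sup>\<alpha>\<close>
yields the claim.\<close>

lemma height_le_one:
  assumes "K > 1"
  shows "height K W gr p \<le> 1"
  using assms by (simp add: height_def powr_minus_divide ge_one_powr_ge_zero)

lemma dense_exists_between:
  fixes I W :: "real set"
  assumes "is_interval I" "I \<subseteq> closure W" "x \<in> I" "y \<in> I" "x < y"
  obtains w where "w \<in> W" "x < w" "w < y"
proof -
  have "(x + y) / 2 \<in> I"
    by (rule mem_is_interval_1_I[of I x y]) (use assms in auto)
  then have "(x + y) / 2 \<in> closure W" using assms(2) by blast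
  then obtain w where "w \<in> W" and close: "dist w ((x + y) / 2) < (y - x) / 2"
    using assms(5) unfolding closure_approachable by (metis diff_gt_0_iff_gt half_gt_zero)
  from close have "x < w" "w < y" by (auto simp: dist_real_def abs_less_iff field_simps)
  with \<open>w \<in> W\<close> show thesis by (rule that)
qed

definition right_lift :: "real set \<Rightarrow> real \<Rightarrow> real \<times> side" where
  "right_lift W x = (x, if x \<in> W then SR else SM)"

definition left_lift :: "real set \<Rightarrow> real \<Rightarrow> real \<times> side" where
  "left_lift W x = (x, if x \<in> W then SL else SM)"

lemma right_lift_in_fractured_interval: "x \<in> I \<Longrightarrow> right_lift W x \<in> fractured_interval I W"
  unfolding right_lift_def fractured_interval_def by auto

lemma left_lift_in_fractured_interval: "x \<in> I \<Longrightarrow> left_lift W x \<in> fractured_interval I W"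
  unfolding left_lift_def fractured_interval_def by auto

lemma proj_right_lift [simp]: "proj (right_lift W x) = x"
  by (simp add: proj_def right_lift_def)

lemma proj_left_lift [simp]: "proj (left_lift W x) = x"
  by (simp add: proj_def left_lift_def)

lemma div_less_right_left_lift: "x < y \<Longrightarrow> div_less (right_lift W x) (left_lift W y)"
  unfolding right_lift_def left_lift_def div_less_def by auto

lemma div_dist_right_left_lift:
  "x < y \<Longrightarrow> div_dist K I W gr (right_lift W x) (left_lift W y) =
              div_dist_ord K I W gr (right_lift W x) (left_lift W y)"
  using div_less_right_left_lift unfolding div_dist_def by simp

lemma between_lifts_eq:
  "{p \<in> divided_interval I W. div_less (right_lift W x) p \<and> div_less p (left_lift W y)} =
   {p \<in> divided_interval I W. x < fst p \<and> fst p < y}"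
proof (intro Collect_cong)
  fix p :: "real \<times> side"
  show "p \<in> divided_interval I W \<and> div_less (right_lift W x) p \<and> div_less p (left_lift W y) \<longleftrightarrow>
        p \<in> divided_interval I W \<and> x < fst p \<and> fst p < y"
    unfolding divided_interval_def div_less_def right_lift_def left_lift_def
    by (cases "snd p") (auto split: if_splits)
qed

lemma div_dist_ord_lifts_le:
  assumes "is_interval I" "x \<in> I" "y \<in> I" "x < y" "r \<ge> 0"
    and light: "\<And>w. w \<in> W \<Longrightarrow> x < w \<Longrightarrow> w < y \<Longrightarrow> K powr (- real (gr w)) < r"
  shows "div_dist_ord K I W gr (right_lift W x) (left_lift W y) \<le> r"
proof -
  let ?S = "{p \<in> divided_interval I W. x < fst p \<and> fst p < y}"
  have "(x + y) / 2 \<in> I"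
    by (rule mem_is_interval_1_I[of I x y]) (use assms in auto)
  then have "((x + y) / 2, SM) \<in> ?S"
    using assms(4) by (auto simp: divided_interval_def)
  moreover have "height K W gr p \<le> r" if "p \<in> ?S" for p
    using that light[of "fst p"] assms(5) by (auto simp: height_def)
  ultimately show ?thesis
    unfolding div_dist_ord_def between_lifts_eq by (intro cSup_least) blast+
qed

lemma div_dist_ord_lifts_ge:
  assumes "K > 1" "W \<subseteq> I" "w \<in> W" "x < w" "w < y"
  shows "K powr (- real (gr w)) \<le> div_dist_ord K I W gr (right_lift W x) (left_lift W y)"
proof -
  let ?S = "{p \<in> divided_interval I W. x < fst p \<and> fst p < y}"
  have "(w, SM) \<in> ?S"
    using assms by (auto simp: divided_interval_def)
  moreover have "bdd_above (height K W gr ` ?S)"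
    using height_le_one[OF assms(1)] by (meson bdd_aboveI2)
  ultimately have "height K W gr (w, SM) \<le> Sup (height K W gr ` ?S)"
    by (intro cSup_upper) auto
  then show ?thesis
    using assms(3) by (simp add: div_dist_ord_def between_lifts_eq height_def)
qed

lemma W_ge_separated:
  assumes "gap K W gr r \<ge> ereal s" "u \<in> W_ge K W gr r" "v \<in> W_ge K W gr r" "u \<noteq> v"
  shows "s \<le> \<bar>u - v\<bar>"
proof -
  have "gap K W gr r \<le> ereal \<bar>u - v\<bar>"
    unfolding gap_def using assms(2-4) by (intro Inf_lower) blast
  then show ?thesis using assms(1) by (metis ereal_less_eq(3) order_trans)
qed

locale holder_on_fractured_interval =
  fixes I W :: "real set" and gr :: "real \<Rightarrow> nat" and K C \<nu> :: real
    and f :: "real \<times> side \<Rightarrow> 'x::metric_space" and ft :: "real \<Rightarrow> 'x"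
  assumes I_int: "is_interval I"
    and W_sub: "W \<subseteq> I" and W_dense: "I \<subseteq> closure W"
    and K_gt: "K > 1" and \<nu>_pos: "\<nu> > 0"
    and f_fac: "\<And>p. p \<in> fractured_interval I W \<Longrightarrow> f p = ft (proj p)"
    and holder: "\<And>s t. s \<in> fractured_interval I W \<Longrightarrow> t \<in> fractured_interval I W \<Longrightarrow>
                   dist (f s) (f t) \<le> C * (div_dist K I W gr s t) powr \<nu>"
begin

abbreviation lift_dist :: "real \<Rightarrow> real \<Rightarrow> real" where
  "lift_dist x y \<equiv> div_dist_ord K I W gr (right_lift W x) (left_lift W y)"

lemma dist_le_lift_dist:
  assumes "x \<in> I" "y \<in> I" "x < y"
  shows "dist (ft x) (ft y) \<le> C * lift_dist x y powr \<nu>"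
  using holder[OF right_lift_in_fractured_interval[OF assms(1)] left_lift_in_fractured_interval[OF assms(2)]]
    f_fac[OF right_lift_in_fractured_interval[OF assms(1)]]
    f_fac[OF left_lift_in_fractured_interval[OF assms(2)]]
    div_dist_right_left_lift[OF assms(3)]
  by simp

lemma lift_dist_pos:
  assumes "x \<in> I" "y \<in> I" "x < y"
  shows "lift_dist x y > 0"
proof -
  obtain w where "w \<in> W" "x < w" "w < y"
    using dense_exists_between[OF I_int W_dense assms] .
  then have "K powr (- real (gr w)) \<le> lift_dist x y"
    using div_dist_ord_lifts_ge[OF K_gt W_sub] by blast
  moreover have "K powr (- real (gr w)) > 0" using K_gt by simp
  ultimately show ?thesis by linarith
qed

lemma holder_constant_nonneg:
  assumes "x \<in> I" "y \<in> I" "x < y"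
  shows "C \<ge> 0"
proof (rule ccontr)
  assume "\<not> C \<ge> 0"
  moreover have "lift_dist x y powr \<nu> > 0" using lift_dist_pos[OF assms] by simp
  ultimately have "C * lift_dist x y powr \<nu> < 0" by (simp add: mult_neg_pos)
  with dist_le_lift_dist[OF assms] show False by (smt (verit) zero_le_dist)
qed

lemma dist_le_without_heavy_points:
  assumes "x \<in> I" "y \<in> I" "x < y" "r \<ge> 0"
    and light: "\<And>w. w \<in> W \<Longrightarrow> x < w \<Longrightarrow> w < y \<Longrightarrow> K powr (- real (gr w)) < r"
  shows "dist (ft x) (ft y) \<le> C * r powr \<nu>"
proof -
  have "lift_dist x y powr \<nu> \<le> r powr \<nu>"
    using div_dist_ord_lifts_le[OF I_int assms] lift_dist_pos[OF assms(1-3)] \<nu>_pos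
    by (intro powr_mono2) auto
  then have "C * lift_dist x y powr \<nu> \<le> C * r powr \<nu>"
    using holder_constant_nonneg[OF assms(1-3)] by (rule mult_left_mono)
  with dist_le_lift_dist[OF assms(1-3)] show ?thesis by linarith
qed

lemma dist_le_with_one_heavy_point:
  assumes "a \<in> I" "b \<in> I" "a < b" "r \<ge> 0"
    and unique: "\<And>u v. \<lbrakk>u \<in> W; v \<in> W; a < u; u < b; a < v; v < b;
                        K powr (- real (gr u)) \<ge> r; K powr (- real (gr v)) \<ge> r\<rbrakk> \<Longrightarrow> u = v"
  shows "dist (ft a) (ft b) \<le> 2 * C * r powr \<nu>"
proof (cases "\<exists>w\<in>W. a < w \<and> w < b \<and> K powr (- real (gr w)) \<ge> r")
  case False
  then have "dist (ft a) (ft b) \<le> C * r powr \<nu>"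
    using assms by (intro dist_le_without_heavy_points) (auto simp: not_le)
  moreover have "C * r powr \<nu> \<ge> 0" using holder_constant_nonneg[OF assms(1-3)] by simp
  ultimately show ?thesis by linarith
next
  case True
  then obtain w where w: "w \<in> W" "a < w" "w < b" "K powr (- real (gr w)) \<ge> r" by blast
  have "w \<in> I" using w W_sub by blast
  have light: "K powr (- real (gr v)) < r" if "v \<in> W" "a < v" "v < b" "v \<noteq> w" for v
    using unique[OF that(1) w(1) that(2,3) w(2,3) _ w(4)] that(4) by (meson not_le)
  have "dist (ft a) (ft w) \<le> C * r powr \<nu>"
    using assms(1,3,4) w \<open>w \<in> I\<close> light by (intro dist_le_without_heavy_points) auto
  moreover have "dist (ft w) (ft b) \<le> C * r powr \<nu>"
    using assms(2,4) w \<open>w \<in> I\<close> light by (intro dist_le_without_heavy_points) auto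
  ultimately show ?thesis
    using dist_triangle[of "ft a" "ft b" "ft w"] by linarith
qed

lemma dist_le_gap_scale:
  assumes "a \<in> I" "b \<in> I" "a < b" "M > 0" "\<alpha> > 0"
    and gap_bd: "\<And>r. r > 0 \<Longrightarrow> gap K W gr r \<ge> ereal (M * r powr \<alpha>)"
  shows "dist (ft a) (ft b) \<le> 2 * C / M powr (\<nu> / \<alpha>) * (b - a) powr (\<nu> / \<alpha>)"
proof -
  define r0 where "r0 = ((b - a) / M) powr (1 / \<alpha>)"
  have r0_pos: "r0 > 0" using assms by (simp add: r0_def)
  have bound: "dist (ft a) (ft b) \<le> 2 * C * r powr \<nu>" if "r > r0" for r
  proof (rule dist_le_with_one_heavy_point[OF assms(1-3)])
    have "r0 powr \<alpha> < r powr \<alpha>" using that r0_pos assms(5) by (intro powr_less_mono2) auto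
    then have wide: "b - a < M * r powr \<alpha>"
      using assms(3-5) by (simp add: r0_def powr_powr field_simps)
    fix u v assume uv: "u \<in> W" "v \<in> W" "a < u" "u < b" "a < v" "v < b"
      "K powr (- real (gr u)) \<ge> r" "K powr (- real (gr v)) \<ge> r"
    show "u = v"
    proof (rule ccontr)
      assume "u \<noteq> v"
      then have "M * r powr \<alpha> \<le> \<bar>u - v\<bar>"
        using uv that r0_pos by (intro W_ge_separated[OF gap_bd]) (auto simp: W_ge_def)
      with wide uv show False by linarith
    qed
  qed (use that r0_pos in linarith)
  have "((\<lambda>r. 2 * C * r powr \<nu>) \<longlongrightarrow> 2 * C * r0 powr \<nu>) (at_right r0)"
    using r0_pos by (intro tendsto_intros) auto
  then have "dist (ft a) (ft b) \<le> 2 * C * r0 powr \<nu>"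
    by (rule tendsto_lowerbound) (auto intro: eventually_mono[OF eventually_at_right_less] bound)
  also have "r0 powr \<nu> = (b - a) powr (\<nu> / \<alpha>) / M powr (\<nu> / \<alpha>)"
    using assms(3,4) by (simp add: r0_def powr_powr powr_divide)
  finally show ?thesis by simp
qed

end

theorem theorem3p10:
  fixes I W :: "real set" and gr :: "real \<Rightarrow> nat" and K M \<alpha> \<nu> C :: real
    and f :: "real \<times> side \<Rightarrow> 'x::metric_space" and ft :: "real \<Rightarrow> 'x"
  assumes I_open: "open I" and I_int: "is_interval I"
    and W_sub: "W \<subseteq> I" and W_count: "countable W" and W_dense: "I \<subseteq> closure W"
    and gr_fib: "\<And>n. finite {w \<in> W. gr w = n}"
    and K_gt: "K > 1"
    and M_pos: "M > 0" and \<alpha>_pos: "\<alpha> > 0"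
    and gap_bd: "\<And>r. r > 0 \<Longrightarrow> gap K W gr r \<ge> ereal (M * r powr \<alpha>)"
    and f_fac: "\<And>p. p \<in> fractured_interval I W \<Longrightarrow> f p = ft (proj p)"
    and \<nu>_pos: "\<nu> > 0"
    and holder: "\<And>s t. s \<in> fractured_interval I W \<Longrightarrow> t \<in> fractured_interval I W \<Longrightarrow>
                   dist (f s) (f t) \<le> C * (div_dist K I W gr s t) powr \<nu>"
  shows "\<forall>a\<in>I. \<forall>b\<in>I. dist (ft a) (ft b) \<le> 2 * C / M powr (\<nu> / \<alpha>) * \<bar>b - a\<bar> powr (\<nu> / \<alpha>)"
proof (intro ballI)
  interpret holder_on_fractured_interval I W gr K C \<nu> f ft
    using I_int W_sub W_dense K_gt \<nu>_pos f_fac holder by unfold_locales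
  fix a b assume "a \<in> I" "b \<in> I"
  consider "a < b" | "a = b" | "b < a" by linarith
  then show "dist (ft a) (ft b) \<le> 2 * C / M powr (\<nu> / \<alpha>) * \<bar>b - a\<bar> powr (\<nu> / \<alpha>)"
  proof cases
    case 1
    then show ?thesis using dist_le_gap_scale[OF \<open>a \<in> I\<close> \<open>b \<in> I\<close> 1 M_pos \<alpha>_pos gap_bd] by simp
  next
    case 3
    then show ?thesis using dist_le_gap_scale[OF \<open>b \<in> I\<close> \<open>a \<in> I\<close> 3 M_pos \<alpha>_pos gap_bd]
      by (simp add: dist_commute abs_minus_commute)
  qed simp
qed

end
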